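(* For $n = 3$, the Eigenvector Method satisfies invariance to $\alpha$-transformation on a triad; hence a counterexample showing that the Eigenvector Method violates this invariance requires at least $n=4$ alternatives.
   Context: A pairwise comparison matrix of size $n$ is a matrix $\mathbf{A} = [a_{i,j}]$ with positive entries and $a_{j,i} = 1/a_{i,j}$ for all $i,j$. The Eigenvector Method assigns to $\mathbf{A}$ the vector $\mathbf{w}$ with positive entries, $\sum_i w_i = 1$, and $\mathbf{A}\mathbf{w} = \lambda_{\max}\mathbf{w}$, where $\lambda_{\max}$ is the Perron eigenvalue of $\mathbf{A}$. An $\alpha$-transformation on the triad $(i,j,k)$ (three distinct indices), with $\alpha>0$, maps $\mathbf{A}$ to $\hat{\mathbf{A}}$ with $\hat a_{i,j} = \alpha a_{i,j}$, $\hat a_{j,i} = a_{j,i}/\alpha$, $\hat a_{j,k} = \alpha a_{j,k}$, $\hat a_{k,j} = a_{k,j}/\alpha$, $\hat a_{k,i} = \alpha a_{k,i}$, $\hat a_{i,k} = a_{i,k}/\alpha$, all other entries unchanged. A weighting method $f$ is invariant to $\alpha$-transformation on a triad if $f(\mathbf{A}) = f(\hat{\mathbf{A}})$ whenever $\hat{\mathbf{A}}$ arises from $\mathbf{A}$ by such a transformation. (For $n \le 2$ there are no triads, so the invariance holds vacuously.) *)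

theory Defs
  imports Complex_Main
begin

text \<open>Matrices of size n are represented as functions nat => nat => real,
  with only the indices 0..n-1 being relevant.\<close>

definition pcm :: "nat \<Rightarrow> (nat \<Rightarrow> nat \<Rightarrow> real) \<Rightarrow> bool" where
  "pcm n A \<longleftrightarrow> (\<forall>i<n. \<forall>j<n. A i j > 0 \<and> A j i = 1 / A i j)"

definition eigenvalues :: "nat \<Rightarrow> (nat \<Rightarrow> nat \<Rightarrow> real) \<Rightarrow> complex set" where
  "eigenvalues n A = {z. \<exists>v :: nat \<Rightarrow> complex. (\<exists>i<n. v i \<noteq> 0) \<and>
      (\<forall>i<n. (\<Sum>j<n. complex_of_real (A i j) * v j) = z * v i)}"

definition perron_eigenvalue :: "nat \<Rightarrow> (nat \<Rightarrow> nat \<Rightarrow> real) \<Rightarrow> real" where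
  "perron_eigenvalue n A = Sup (cmod ` eigenvalues n A)"

definition EM :: "nat \<Rightarrow> (nat \<Rightarrow> nat \<Rightarrow> real) \<Rightarrow> (nat \<Rightarrow> real)" where
  "EM n A = (THE w. (\<forall>i<n. w i > 0) \<and> (\<forall>i\<ge>n. w i = 0) \<and> (\<Sum>i<n. w i) = 1 \<and>
      (\<forall>i<n. (\<Sum>j<n. A i j * w j) = perron_eigenvalue n A * w i))"

definition alpha_transform ::
  "(nat \<Rightarrow> nat \<Rightarrow> real) \<Rightarrow> nat \<Rightarrow> nat \<Rightarrow> nat \<Rightarrow> real \<Rightarrow> (nat \<Rightarrow> nat \<Rightarrow> real)" where
  "alpha_transform A i j k \<alpha> = (\<lambda>p q.
     if (p, q) = (i, j) \<or> (p, q) = (j, k) \<or> (p, q) = (k, i) then \<alpha> * A p q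
     else if (p, q) = (j, i) \<or> (p, q) = (k, j) \<or> (p, q) = (i, k) then A p q / \<alpha>
     else A p q)"

end

theory Submission
  imports Defs
begin

text \<open>For a positive matrix, a positive eigenvector already determines the Perron eigenvalue and,
  up to scaling, the Perron vector. For \<open>n = 3\<close> the row geometric means \<open>g\<close> of a pairwise
  comparison matrix form such an eigenvector: with \<open>s\<close> the cube root of \<open>a\<^sub>0\<^sub>1 a\<^sub>1\<^sub>2 a\<^sub>2\<^sub>0\<close>,
  cubing shows \<open>a\<^sub>0\<^sub>1 g\<^sub>1 = s g\<^sub>0\<close>, \<open>a\<^sub>1\<^sub>2 g\<^sub>2 = s g\<^sub>1\<close>, \<open>a\<^sub>2\<^sub>0 g\<^sub>0 = s g\<^sub>2\<close>, and by reciprocity the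
  other off-diagonal terms of row \<open>i\<close> equal \<open>g\<^sub>i / s\<close>, so every row sum is \<open>(1 + s + 1/s) g\<^sub>i\<close>.
  An \<open>\<alpha>\<close>-transformation multiplies one entry of each affected row by \<open>\<alpha>\<close> and another by \<open>1/\<alpha>\<close>,
  so it preserves all row products, hence the row geometric means, hence the Eigenvector Method.\<close>

lemma eigenvalue_norm_le_positive_eigenvalue:
  fixes A :: "nat \<Rightarrow> nat \<Rightarrow> real" and g :: "nat \<Rightarrow> real"
  assumes A_nonneg: "\<And>i j. i < n \<Longrightarrow> j < n \<Longrightarrow> A i j \<ge> 0"
    and g_pos: "\<And>i. i < n \<Longrightarrow> g i > 0"
    and g_eigen: "\<And>i. i < n \<Longrightarrow> (\<Sum>j<n. A i j * g j) = l * g i"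
    and z: "z \<in> eigenvalues n A"
  shows "cmod z \<le> l"
proof -
  obtain v where v_nonzero: "\<exists>i<n. v i \<noteq> 0"
    and v_eigen: "\<forall>i<n. (\<Sum>j<n. complex_of_real (A i j) * v j) = z * v i"
    using z unfolding eigenvalues_def by blast
  define f where "f i = cmod (v i) / g i" for i
  define m where "m = Max (f ` {..<n})"
  obtain i1 where i1: "i1 < n" "v i1 \<noteq> 0" using v_nonzero by blast
  have fin: "finite (f ` {..<n})" and ne: "f ` {..<n} \<noteq> {}" using i1 by auto
  have f_le_m: "f j \<le> m" if "j < n" for j unfolding m_def using fin that by (intro Max_ge) auto
  obtain i0 where i0: "i0 < n" "f i0 = m" using Max_in[OF fin ne] unfolding m_def by auto
  have "f i1 > 0" unfolding f_def using i1 g_pos by auto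
  with f_le_m[OF i1(1)] have m_pos: "m > 0" by linarith
  have v_i0: "cmod (v i0) = m * g i0" using i0 g_pos[OF i0(1)] unfolding f_def by (auto simp: field_simps)
  have v_le: "cmod (v j) \<le> m * g j" if "j < n" for j
    using f_le_m[OF that] g_pos[OF that] unfolding f_def by (simp add: pos_divide_le_eq)
  have "cmod z * cmod (v i0) = cmod (\<Sum>j<n. complex_of_real (A i0 j) * v j)"
    using v_eigen i0 by (simp add: norm_mult)
  also have "\<dots> \<le> (\<Sum>j<n. cmod (complex_of_real (A i0 j) * v j))" by (rule norm_sum)
  also have "\<dots> = (\<Sum>j<n. A i0 j * cmod (v j))"
    using A_nonneg i0 by (intro sum.cong) (auto simp: norm_mult)
  also have "\<dots> \<le> (\<Sum>j<n. A i0 j * (m * g j))"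
    using A_nonneg i0 v_le by (intro sum_mono mult_left_mono) auto
  also have "\<dots> = m * (\<Sum>j<n. A i0 j * g j)" by (simp add: sum_distrib_left algebra_simps)
  also have "\<dots> = l * cmod (v i0)" using g_eigen[OF i0(1)] v_i0 by simp
  finally show ?thesis using v_i0 m_pos g_pos[OF i0(1)] by simp
qed

lemma perron_eigenvalue_eq_positive_eigenvalue:
  fixes A :: "nat \<Rightarrow> nat \<Rightarrow> real" and g :: "nat \<Rightarrow> real"
  assumes n: "0 < n"
    and A_nonneg: "\<And>i j. i < n \<Longrightarrow> j < n \<Longrightarrow> A i j \<ge> 0"
    and g_pos: "\<And>i. i < n \<Longrightarrow> g i > 0"
    and g_eigen: "\<And>i. i < n \<Longrightarrow> (\<Sum>j<n. A i j * g j) = l * g i"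
  shows "perron_eigenvalue n A = l"
  unfolding perron_eigenvalue_def
proof (rule cSup_eq_maximum)
  have "(\<Sum>j<n. A 0 j * g j) \<ge> 0"
    using A_nonneg g_pos n by (intro sum_nonneg) (simp add: less_imp_le)
  then have "l * g 0 \<ge> 0" using g_eigen[OF n] by simp
  then have "l \<ge> 0" using g_pos[OF n] by (simp add: zero_le_mult_iff)
  moreover have "complex_of_real l \<in> eigenvalues n A"
    unfolding eigenvalues_def
  proof (intro CollectI exI[of _ "\<lambda>j. complex_of_real (g j)"] conjI allI impI)
    show "\<exists>i<n. complex_of_real (g i) \<noteq> 0" using n g_pos[OF n] by auto
  next
    fix i assume "i < n"
    then have "complex_of_real (\<Sum>j<n. A i j * g j) = complex_of_real (l * g i)" using g_eigen by simp
    then show "(\<Sum>j<n. complex_of_real (A i j) * complex_of_real (g j)) = complex_of_real l * complex_of_real (g i)"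
      by simp
  qed
  ultimately show "l \<in> cmod ` eigenvalues n A" by (intro image_eqI[of _ _ "complex_of_real l"]) auto
next
  fix x assume "x \<in> cmod ` eigenvalues n A"
  then show "x \<le> l" using eigenvalue_norm_le_positive_eigenvalue[OF A_nonneg g_pos g_eigen] by auto
qed

text \<open>With \<open>c\<close> the least ratio \<open>w\<^sub>j / g\<^sub>j\<close>, the eigenvector \<open>w - c g\<close> is nonnegative and vanishes at
  some index \<open>i\<^sub>0\<close>; row \<open>i\<^sub>0\<close> of the positive matrix then forces it to vanish everywhere.\<close>

lemma eigenvector_eq_scaled_positive_eigenvector:
  fixes A :: "nat \<Rightarrow> nat \<Rightarrow> real" and g w :: "nat \<Rightarrow> real"
  assumes n: "0 < n"
    and A_pos: "\<And>i j. i < n \<Longrightarrow> j < n \<Longrightarrow> A i j > 0"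
    and g_pos: "\<And>i. i < n \<Longrightarrow> g i > 0"
    and g_eigen: "\<And>i. i < n \<Longrightarrow> (\<Sum>j<n. A i j * g j) = l * g i"
    and w_eigen: "\<And>i. i < n \<Longrightarrow> (\<Sum>j<n. A i j * w j) = l * w i"
  obtains c where "\<And>j. j < n \<Longrightarrow> w j = c * g j"
proof
  define h where "h i = w i / g i" for i
  define c where "c = Min (h ` {..<n})"
  define u where "u j = w j - c * g j" for j
  have fin: "finite (h ` {..<n})" and ne: "h ` {..<n} \<noteq> {}" using n by auto
  obtain i0 where i0: "i0 < n" "h i0 = c" using Min_in[OF fin ne] unfolding c_def by auto
  have u_nonneg: "u j \<ge> 0" if "j < n" for j
    using Min_le[OF fin, of "h j"] that g_pos[OF that] unfolding u_def h_def c_def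
    by (simp add: le_divide_eq)
  have "u i0 = 0" using i0 g_pos[OF i0(1)] unfolding u_def h_def by (auto simp: field_simps)
  moreover have "(\<Sum>j<n. A i0 j * u j) = (\<Sum>j<n. A i0 j * w j) - c * (\<Sum>j<n. A i0 j * g j)"
    unfolding u_def by (simp add: algebra_simps sum_subtractf sum_distrib_left)
  moreover have "\<dots> = l * u i0"
    using w_eigen[OF i0(1)] g_eigen[OF i0(1)] unfolding u_def by (simp add: algebra_simps)
  ultimately have "(\<Sum>j<n. A i0 j * u j) = 0" by simp
  then have "\<forall>j\<in>{..<n}. A i0 j * u j = 0"
    using sum_nonneg_eq_0_iff[of "{..<n}" "\<lambda>j. A i0 j * u j"] A_pos[OF i0(1)] u_nonneg
    by (simp add: less_imp_le)
  then have "u j = 0" if "j < n" for j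
    using that A_pos[OF i0(1) that] by (metis lessThan_iff mult_eq_0_iff less_irrefl)
  then show "w j = c * g j" if "j < n" for j using that unfolding u_def by simp
qed

lemma EM_eq_normalized_positive_eigenvector:
  fixes A :: "nat \<Rightarrow> nat \<Rightarrow> real" and g :: "nat \<Rightarrow> real"
  assumes n: "0 < n"
    and A_pos: "\<And>i j. i < n \<Longrightarrow> j < n \<Longrightarrow> A i j > 0"
    and g_pos: "\<And>i. i < n \<Longrightarrow> g i > 0"
    and g_eigen: "\<And>i. i < n \<Longrightarrow> (\<Sum>j<n. A i j * g j) = l * g i"
  shows "EM n A = (\<lambda>i. if i < n then g i / (\<Sum>j<n. g j) else 0)"
proof -
  define S where "S = (\<Sum>j<n. g j)"
  have S_pos: "S > 0" unfolding S_def using n g_pos by (intro sum_pos) auto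
  have perron: "perron_eigenvalue n A = l"
    using perron_eigenvalue_eq_positive_eigenvalue[OF n _ g_pos g_eigen] A_pos by (simp add: less_imp_le)
  show ?thesis
    unfolding EM_def perron S_def[symmetric]
  proof (rule the_equality, intro conjI allI impI)
    fix i assume "i < n"
    then show "0 < (if i < n then g i / S else 0)" using g_pos S_pos by simp
  next
    fix i assume "n \<le> i"
    then show "(if i < n then g i / S else 0) = 0" by simp
  next
    show "(\<Sum>i<n. if i < n then g i / S else 0) = 1"
      using S_pos by (simp add: sum_divide_distrib[symmetric] S_def)
  next
    fix i assume "i < n"
    then show "(\<Sum>j<n. A i j * (if j < n then g j / S else 0)) = l * (if i < n then g i / S else 0)"
      using g_eigen by (simp add: sum_divide_distrib[symmetric])
  next
    fix w assume w: "(\<forall>i<n. 0 < w i) \<and> (\<forall>i\<ge>n. w i = 0) \<and> (\<Sum>i<n. w i) = 1 \<and>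
      (\<forall>i<n. (\<Sum>j<n. A i j * w j) = l * w i)"
    then obtain c where c: "\<And>j. j < n \<Longrightarrow> w j = c * g j"
      using eigenvector_eq_scaled_positive_eigenvector[OF n A_pos g_pos g_eigen] by blast
    have "1 = (\<Sum>j<n. c * g j)" using w c by simp
    then have "c = 1 / S" using S_pos unfolding S_def by (simp add: sum_distrib_left[symmetric] field_simps)
    then show "w = (\<lambda>i. if i < n then g i / S else 0)"
      using w c by (auto simp: fun_eq_iff)
  qed
qed

lemma pcm_entry:
  assumes "pcm n A" "i < n" "j < n"
  shows "A i j > 0" and "A j i = 1 / A i j"
  using assms unfolding pcm_def by blast+

lemma pcm_diagonal:
  assumes "pcm n A" "i < n"
  shows "A i i = 1"
proof -
  have pos: "A i i > 0" and recip: "A i i = 1 / A i i" using pcm_entry[OF assms assms(2)] .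
  have "A i i * A i i = A i i * (1 / A i i)" by (metis recip)
  then have "(A i i - 1) * (A i i + 1) = 0" using pos by (simp add: algebra_simps)
  then show ?thesis using pos by simp
qed

definition triad_forward :: "nat \<Rightarrow> nat \<Rightarrow> nat \<Rightarrow> nat \<Rightarrow> nat \<Rightarrow> bool" where
  "triad_forward i j k p q \<longleftrightarrow> (p, q) = (i, j) \<or> (p, q) = (j, k) \<or> (p, q) = (k, i)"

lemma alpha_transform_eq:
  "alpha_transform A i j k \<alpha> p q =
    (if triad_forward i j k p q then \<alpha> * A p q else if triad_forward i j k q p then A p q / \<alpha> else A p q)"
  unfolding alpha_transform_def triad_forward_def by auto

lemma triad_forward_asym:
  assumes "i \<noteq> j" "j \<noteq> k" "i \<noteq> k" "triad_forward i j k p q"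
  shows "\<not> triad_forward i j k q p"
  using assms unfolding triad_forward_def by auto

lemma pcm_alpha_transform:
  assumes "pcm n A" "i \<noteq> j" "j \<noteq> k" "i \<noteq> k" "\<alpha> > 0"
  shows "pcm n (alpha_transform A i j k \<alpha>)"
  unfolding pcm_def
proof (intro allI impI conjI)
  fix p q assume "p < n" "q < n"
  then have pos: "A p q > 0" and recip: "A q p = 1 / A p q" using pcm_entry[OF assms(1)] by blast+
  show "alpha_transform A i j k \<alpha> p q > 0"
    using pos assms(5) unfolding alpha_transform_eq by simp
  show "alpha_transform A i j k \<alpha> q p = 1 / alpha_transform A i j k \<alpha> p q"
    using triad_forward_asym[OF assms(2-4), of p q] pos assms(5)
    unfolding alpha_transform_eq recip by (cases "triad_forward i j k p q"; cases "triad_forward i j k q p") simp_all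
qed

lemma prod_reciprocal_factors:
  fixes f :: "nat \<Rightarrow> real"
  assumes "a < n" "b < n" "a \<noteq> b" "\<alpha> \<noteq> 0"
  shows "(\<Prod>q<n. f q * (if q = a then \<alpha> else if q = b then 1 / \<alpha> else 1)) = (\<Prod>q<n. f q)"
proof -
  have "(\<Prod>q<n. (if q = a then \<alpha> else if q = b then 1 / \<alpha> else 1)) = \<alpha> * (1 / \<alpha>)"
    using assms(1-3) by (simp add: prod.If_cases)
  then show ?thesis using assms(4) by (simp add: prod.distrib)
qed

lemma prod_row_alpha_transform:
  fixes A :: "nat \<Rightarrow> nat \<Rightarrow> real"
  assumes ijk: "i < n" "j < n" "k < n" "i \<noteq> j" "j \<noteq> k" "i \<noteq> k" and "\<alpha> \<noteq> 0"
  shows "(\<Prod>q<n. alpha_transform A i j k \<alpha> p q) = (\<Prod>q<n. A p q)"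
proof -
  consider (i) "p = i" | (j) "p = j" | (k) "p = k" | (other) "p \<notin> {i, j, k}" by blast
  then show ?thesis
  proof cases
    case i
    then have "alpha_transform A i j k \<alpha> p = (\<lambda>q. A p q * (if q = j then \<alpha> else if q = k then 1 / \<alpha> else 1))"
      using ijk by (auto simp: alpha_transform_eq triad_forward_def fun_eq_iff)
    then show ?thesis using ijk assms(7) prod_reciprocal_factors by simp
  next
    case j
    then have "alpha_transform A i j k \<alpha> p = (\<lambda>q. A p q * (if q = k then \<alpha> else if q = i then 1 / \<alpha> else 1))"
      using ijk by (auto simp: alpha_transform_eq triad_forward_def fun_eq_iff)
    then show ?thesis using ijk assms(7) prod_reciprocal_factors by simp
  next
    case k
    then have "alpha_transform A i j k \<alpha> p = (\<lambda>q. A p q * (if q = i then \<alpha> else if q = j then 1 / \<alpha> else 1))"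
      using ijk by (auto simp: alpha_transform_eq triad_forward_def fun_eq_iff)
    then show ?thesis using ijk assms(7) prod_reciprocal_factors by simp
  next
    case other
    then show ?thesis by (simp add: alpha_transform_def)
  qed
qed

definition row_geometric_mean :: "nat \<Rightarrow> (nat \<Rightarrow> nat \<Rightarrow> real) \<Rightarrow> nat \<Rightarrow> real" where
  "row_geometric_mean n A i = root n (\<Prod>j<n. A i j)"

lemma row_geometric_mean_alpha_transform:
  assumes "i < n" "j < n" "k < n" "i \<noteq> j" "j \<noteq> k" "i \<noteq> k" "\<alpha> \<noteq> 0"
  shows "row_geometric_mean n (alpha_transform A i j k \<alpha>) = row_geometric_mean n A"
  using prod_row_alpha_transform[OF assms] by (simp add: row_geometric_mean_def fun_eq_iff)

lemma sum_lessThan_3: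
  fixes f :: "nat \<Rightarrow> 'a :: comm_monoid_add"
  shows "(\<Sum>j<3. f j) = f 0 + f 1 + f 2"
  by (simp add: numeral_3_eq_3 numeral_2_eq_2 lessThan_Suc ac_simps)

lemma prod_lessThan_3:
  fixes f :: "nat \<Rightarrow> 'a :: comm_monoid_mult"
  shows "(\<Prod>j<3. f j) = f 0 * f 1 * f 2"
  by (simp add: numeral_3_eq_3 numeral_2_eq_2 lessThan_Suc ac_simps)

lemma cyclically_consistent_eigenvector_3:
  assumes B: "pcm 3 B" and s: "s > 0"
    and fwd: "B 0 1 * g 1 = s * g 0" "B 1 2 * g 2 = s * g 1" "B 2 0 * g 0 = s * g 2"
    and i: "i < 3"
  shows "(\<Sum>j<3. B i j * g j) = (1 + s + 1 / s) * g i"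
proof -
  have pos: "B 0 1 > 0" "B 1 2 > 0" "B 2 0 > 0" using pcm_entry(1)[OF B] by simp_all
  have recip: "B 1 0 = 1 / B 0 1" "B 2 1 = 1 / B 1 2" "B 0 2 = 1 / B 2 0"
    using pcm_entry(2)[OF B, of 0 1] pcm_entry(2)[OF B, of 1 2] pcm_entry(2)[OF B, of 2 0] by simp_all
  have bwd: "B 1 0 * g 0 = g 1 / s" "B 2 1 * g 1 = g 2 / s" "B 0 2 * g 2 = g 0 / s"
    using fwd pos s unfolding recip by (auto simp: field_simps)
  have diag: "B 0 0 = 1" "B 1 1 = 1" "B 2 2 = 1" using pcm_diagonal[OF B] by simp_all
  have "i = 0 \<or> i = 1 \<or> i = 2" using i by auto
  then show ?thesis
    unfolding sum_lessThan_3 using fwd bwd diag by (elim disjE) (simp_all add: algebra_simps)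
qed

lemma row_geometric_mean_eigenvector_3:
  assumes B: "pcm 3 B" and i: "i < 3"
  defines "g \<equiv> row_geometric_mean 3 B" and "s \<equiv> root 3 (B 0 1 * B 1 2 * B 2 0)"
  shows "g i > 0" and "(\<Sum>j<3. B i j * g j) = (1 + s + 1 / s) * g i"
proof -
  have pos: "B p q > 0" if "p < 3" "q < 3" for p q using pcm_entry(1)[OF B that] .
  have recip: "B 1 0 = 1 / B 0 1" "B 2 1 = 1 / B 1 2" "B 0 2 = 1 / B 2 0"
    using pcm_entry(2)[OF B, of 0 1] pcm_entry(2)[OF B, of 1 2] pcm_entry(2)[OF B, of 2 0] by simp_all
  have diag: "B 0 0 = 1" "B 1 1 = 1" "B 2 2 = 1" using pcm_diagonal[OF B] by simp_all
  have cyclic_pos: "B 0 1 > 0" "B 1 2 > 0" "B 2 0 > 0" using pos by simp_all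
  have row_prod_pos: "(\<Prod>q<3. B p q) > 0" if "p < 3" for p using pos that by (intro prod_pos) simp
  have g_pos: "g p > 0" if "p < 3" for p
    unfolding g_def row_geometric_mean_def using row_prod_pos[OF that] by simp
  have g_cube: "g p ^ 3 = (\<Prod>q<3. B p q)" if "p < 3" for p
    unfolding g_def row_geometric_mean_def using row_prod_pos[OF that] by (simp add: real_root_pow_pos)
  have s_pos: "s > 0" unfolding s_def using cyclic_pos by simp
  have s_cube: "s ^ 3 = B 0 1 * B 1 2 * B 2 0" unfolding s_def using cyclic_pos by (simp add: real_root_pow_pos)
  have eq_by_cubes: "x = y" if "x > 0" "y > 0" "x ^ 3 = y ^ 3" for x y :: real
    using that by (simp add: power_eq_iff_eq_base)
  have g0: "g 0 ^ 3 = B 0 1 / B 2 0" and g1: "g 1 ^ 3 = B 1 2 / B 0 1" and g2: "g 2 ^ 3 = B 2 0 / B 1 2"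
    using g_cube[of 0] g_cube[of 1] g_cube[of 2] cyclic_pos unfolding prod_lessThan_3 recip diag by simp_all
  have "(B 0 1 * g 1) ^ 3 = (s * g 0) ^ 3" "(B 1 2 * g 2) ^ 3 = (s * g 1) ^ 3"
    "(B 2 0 * g 0) ^ 3 = (s * g 2) ^ 3"
    using cyclic_pos unfolding power_mult_distrib g0 g1 g2 s_cube by (simp_all add: field_simps power3_eq_cube)
  moreover have "0 < g 0" "0 < g 1" "0 < g 2" using g_pos by simp_all
  ultimately have "B 0 1 * g 1 = s * g 0" "B 1 2 * g 2 = s * g 1" "B 2 0 * g 0 = s * g 2"
    using cyclic_pos s_pos by (simp_all add: eq_by_cubes)
  then show "(\<Sum>j<3. B i j * g j) = (1 + s + 1 / s) * g i"
    using cyclically_consistent_eigenvector_3[OF B s_pos _ _ _ i] by blast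
  show "g i > 0" using g_pos[OF i] .
qed

lemma EM_3_eq_row_geometric_mean:
  assumes "pcm 3 B"
  shows "EM 3 B = (\<lambda>i. if i < 3 then row_geometric_mean 3 B i / (\<Sum>j<3. row_geometric_mean 3 B j) else 0)"
proof (rule EM_eq_normalized_positive_eigenvector)
  show "\<And>i j. i < 3 \<Longrightarrow> j < 3 \<Longrightarrow> B i j > 0" using pcm_entry(1)[OF assms] .
  show "\<And>i. i < 3 \<Longrightarrow> row_geometric_mean 3 B i > 0"
    using row_geometric_mean_eigenvector_3(1)[OF assms] .
  show "\<And>i. i < 3 \<Longrightarrow> (\<Sum>j<3. B i j * row_geometric_mean 3 B j) =
      (1 + root 3 (B 0 1 * B 1 2 * B 2 0) + 1 / root 3 (B 0 1 * B 1 2 * B 2 0)) * row_geometric_mean 3 B i"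
    using row_geometric_mean_eigenvector_3(2)[OF assms] .
qed simp

theorem corollary3p1:
  fixes A :: "nat \<Rightarrow> nat \<Rightarrow> real" and i j k :: nat and \<alpha> :: real
  assumes "pcm 3 A"
    and "i < 3" and "j < 3" and "k < 3"
    and "i \<noteq> j" and "j \<noteq> k" and "i \<noteq> k"
    and "\<alpha> > 0"
  shows "EM 3 (alpha_transform A i j k \<alpha>) = EM 3 A"
proof -
  have pcm_transformed: "pcm 3 (alpha_transform A i j k \<alpha>)"
    using pcm_alpha_transform assms by blast
  have "row_geometric_mean 3 (alpha_transform A i j k \<alpha>) = row_geometric_mean 3 A"
    using row_geometric_mean_alpha_transform assms by simp
  then show ?thesis
    unfolding EM_3_eq_row_geometric_mean[OF pcm_transformed] EM_3_eq_row_geometric_mean[OF assms(1)]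
    by (rule arg_cong)
qed

end
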